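(* Let $r\ge1$ and let $\mathcal{P}$ be any partition of $[r]^2=\{1,\dots,r\}\times\{1,\dots,r\}$. Then the set of subgroups $\{G\subseteq\mathfrak{S}_r: [r]^2/G\text{ refines }\mathcal{P}\}$ forms a lattice under subgroup inclusion.
   Context: $\mathfrak{S}_r$ acts on $[r]^2$ diagonally, $\sigma(i,j)=(\sigma(i),\sigma(j))$, and $[r]^2/G$ denotes the partition of $[r]^2$ into $G$-orbits. A partition $Q$ refines $\mathcal{P}$ if every block of $Q$ is contained in some block of $\mathcal{P}$. *)

theory Defs
  imports "HOL-Algebra.Sym_Groups" "HOL-Algebra.Lattice" "HOL-Library.Disjoint_Sets"
begin

definition pair_orbits :: "(nat \<Rightarrow> nat) set \<Rightarrow> nat \<Rightarrow> (nat \<times> nat) set set" where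
  "pair_orbits G r =
     (\<lambda>(i, j). {(\<sigma> i, \<sigma> j) | \<sigma>. \<sigma> \<in> G}) ` ({1..r} \<times> {1..r})"

definition refines :: "'a set set \<Rightarrow> 'a set set \<Rightarrow> bool" where
  "refines Q P \<longleftrightarrow> (\<forall>q\<in>Q. \<exists>p\<in>P. q \<subseteq> p)"

definition refining_subgroups :: "nat \<Rightarrow> (nat \<times> nat) set set \<Rightarrow> (nat \<Rightarrow> nat) set gorder" where
  "refining_subgroups r P =
     \<lparr> carrier = {G. subgroup G (sym_group r) \<and> refines (pair_orbits G r) P},
       eq = (=), le = (\<subseteq>) \<rparr>"

end

theory Submission
  imports Defs
begin

text \<open>A subgroup G of S_r has [r]^2/G refining P exactly when every element of G keeps each
  pair (i, j) inside the block of P containing it: the orbit of (i, j) contains (i, j) itself,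
  and the blocks are disjoint. The permutations with this property form a subgroup S of S_r
  (inverses stay in S because P covers [r]^2), so the poset in question is the lattice of all
  subgroups of S, which is even complete.\<close>

definition partition_stabilizer :: "nat \<Rightarrow> (nat \<times> nat) set set \<Rightarrow> (nat \<Rightarrow> nat) set" where
  "partition_stabilizer r P =
     {\<sigma>. \<sigma> permutes {1..r} \<and> (\<forall>p\<in>P. \<forall>i j. (i, j) \<in> p \<longrightarrow> (\<sigma> i, \<sigma> j) \<in> p)}"

lemma partition_on_block_unique:
  assumes "partition_on A P" "p \<in> P" "q \<in> P" "x \<in> p" "x \<in> q"
  shows "p = q"
  using disjointD[OF partition_onD2[OF assms(1)] assms(2,3)] assms(4,5) by blast

lemma partition_on_block_exists:
  assumes "partition_on A P" "x \<in> A"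
  obtains p where "p \<in> P" "x \<in> p"
  using partition_onD1[OF assms(1)] assms(2) by blast

lemma subgroup_partition_stabilizer:
  assumes P: "partition_on ({1..r} \<times> {1..r}) P"
  shows "subgroup (partition_stabilizer r P) (sym_group r)"
proof
  show "partition_stabilizer r P \<subseteq> carrier (sym_group r)"
    by (auto simp: partition_stabilizer_def sym_group_carrier)
  show "\<one>\<^bsub>sym_group r\<^esub> \<in> partition_stabilizer r P"
    by (simp add: partition_stabilizer_def sym_group_one permutes_id)
next
  fix \<sigma> \<tau>
  assume "\<sigma> \<in> partition_stabilizer r P" "\<tau> \<in> partition_stabilizer r P"
  then show "\<sigma> \<otimes>\<^bsub>sym_group r\<^esub> \<tau> \<in> partition_stabilizer r P"
    by (simp add: partition_stabilizer_def sym_group_mult permutes_compose)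
next
  fix \<sigma>
  assume \<sigma>: "\<sigma> \<in> partition_stabilizer r P"
  then have perm: "\<sigma> permutes {1..r}"
    by (simp add: partition_stabilizer_def)
  have "(inv' \<sigma> i, inv' \<sigma> j) \<in> p" if p: "p \<in> P" and ij: "(i, j) \<in> p" for p i j
  proof -
    have "(i, j) \<in> {1..r} \<times> {1..r}"
      using partition_onD1[OF P] p ij by blast
    then have "(inv' \<sigma> i, inv' \<sigma> j) \<in> {1..r} \<times> {1..r}"
      using permutes_in_image[OF permutes_inv[OF perm]] by blast
    then obtain q where q: "q \<in> P" "(inv' \<sigma> i, inv' \<sigma> j) \<in> q"
      using partition_on_block_exists[OF P] by blast
    then have "(\<sigma> (inv' \<sigma> i), \<sigma> (inv' \<sigma> j)) \<in> q"
      using \<sigma> by (simp add: partition_stabilizer_def)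
    then have "(i, j) \<in> q"
      by (simp add: permutes_inverses(1)[OF perm])
    with q p ij show ?thesis
      using partition_on_block_unique[OF P] by metis
  qed
  then have "inv' \<sigma> \<in> partition_stabilizer r P"
    unfolding partition_stabilizer_def using permutes_inv[OF perm] by blast
  with perm show "inv\<^bsub>sym_group r\<^esub> \<sigma> \<in> partition_stabilizer r P"
    by (simp add: sym_group_carrier)
qed

lemma refines_pair_orbits_iff_subset_stabilizer:
  assumes P: "partition_on ({1..r} \<times> {1..r}) P"
    and G: "subgroup G (sym_group r)"
  shows "refines (pair_orbits G r) P \<longleftrightarrow> G \<subseteq> partition_stabilizer r P"
proof
  assume refines: "refines (pair_orbits G r) P"
  show "G \<subseteq> partition_stabilizer r P"
  proof
    fix \<sigma>
    assume \<sigma>: "\<sigma> \<in> G"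
    have "(\<sigma> i, \<sigma> j) \<in> p" if p: "p \<in> P" and ij: "(i, j) \<in> p" for p i j
    proof -
      let ?orbit = "{(\<tau> i, \<tau> j) | \<tau>. \<tau> \<in> G}"
      have "(i, j) \<in> {1..r} \<times> {1..r}"
        using partition_onD1[OF P] p ij by blast
      then have "?orbit \<in> pair_orbits G r"
        by (auto simp: pair_orbits_def)
      then obtain q where q: "q \<in> P" "?orbit \<subseteq> q"
        using refines by (auto simp: refines_def)
      have "id \<in> G"
        using subgroup.one_closed[OF G] by (simp add: sym_group_one)
      then have "(i, j) \<in> q"
        using q(2) by force
      then have "q = p"
        using partition_on_block_unique[OF P q(1) p _ ij] by blast
      with q(2) \<sigma> show ?thesis
        by blast
    qed
    moreover have "\<sigma> permutes {1..r}"
      using subgroup.subset[OF G] \<sigma> by (auto simp: sym_group_carrier)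
    ultimately show "\<sigma> \<in> partition_stabilizer r P"
      by (simp add: partition_stabilizer_def)
  qed
next
  assume stab: "G \<subseteq> partition_stabilizer r P"
  show "refines (pair_orbits G r) P"
    unfolding refines_def
  proof
    fix orbit
    assume "orbit \<in> pair_orbits G r"
    then obtain i j where ij: "(i, j) \<in> {1..r} \<times> {1..r}"
      and orbit: "orbit = {(\<sigma> i, \<sigma> j) | \<sigma>. \<sigma> \<in> G}"
      by (auto simp: pair_orbits_def)
    obtain p where p: "p \<in> P" "(i, j) \<in> p"
      using partition_on_block_exists[OF P ij] by blast
    have "orbit \<subseteq> p"
      using stab p by (auto simp: orbit partition_stabilizer_def)
    with p show "\<exists>p\<in>P. orbit \<subseteq> p"
      by blast
  qed
qed

lemma refining_subgroups_eq_subgroup_lattice: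
  assumes P: "partition_on ({1..r} \<times> {1..r}) P"
  shows "refining_subgroups r P =
    \<lparr>carrier = {G. subgroup G ((sym_group r)\<lparr>carrier := partition_stabilizer r P\<rparr>)},
     eq = (=), le = (\<subseteq>)\<rparr>"
proof -
  interpret sym: group "sym_group r"
    by (rule sym_group_is_group)
  have stab: "subgroup (partition_stabilizer r P) (sym_group r)"
    using P by (rule subgroup_partition_stabilizer)
  have "subgroup G (sym_group r) \<and> refines (pair_orbits G r) P \<longleftrightarrow>
        subgroup G ((sym_group r)\<lparr>carrier := partition_stabilizer r P\<rparr>)" for G
    using refines_pair_orbits_iff_subset_stabilizer[OF P] sym.subgroup_incl[OF _ stab]
      sym.incl_subgroup[OF stab] subgroup.subset[of G] by fastforce
  then show ?thesis
    by (simp add: refining_subgroups_def)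
qed

theorem lemma2p8:
  fixes r :: nat and P :: "(nat \<times> nat) set set"
  assumes "r \<ge> 1"
    and "partition_on ({1..r} \<times> {1..r}) P"
  shows "lattice (refining_subgroups r P)"
proof -
  have "group ((sym_group r)\<lparr>carrier := partition_stabilizer r P\<rparr>)"
    using group.subgroup_imp_group[OF sym_group_is_group
        subgroup_partition_stabilizer[OF assms(2)]] .
  then have "complete_lattice (refining_subgroups r P)"
    unfolding refining_subgroups_eq_subgroup_lattice[OF assms(2)]
    by (rule group.subgroups_complete_lattice)
  then show ?thesis
    by (rule complete_lattice_lattice)
qed

end
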